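(* Let $u\in\mathbb{F}_q$ be such that $u^2-u+1$ is a non-square in $\mathbb{F}_q$, and let $\ell_u$ be the line $Y_3-3uY_2+3u^2Y_1-u^3Y_0=0,\ Y_1-Y_2=0$ of $\mathrm{PG}(3,q)$. Then the stabiliser of $\ell_u$ in $G$ has order $2$.
   Context: Let $q$ be a power of a prime $p\neq 2,3$. $G\le \mathrm{PGL}(4,q)$ is the image of $\mathrm{PGL}(2,q)$ under the homomorphism sending the projectivity with matrix $\begin{pmatrix}a&b\\c&d\end{pmatrix}$ to the projectivity with matrix $\begin{pmatrix} a^3&a^2b&ab^2&b^3\\ 3a^2c&a^2d+2abc&b^2c+2abd&3b^2d\\ 3ac^2&bc^2+2acd&ad^2+2bcd&3bd^2\\ c^3&c^2d&cd^2&d^3\end{pmatrix}$, acting on points $(Y_0,\dots,Y_3)$ of $\mathrm{PG}(3,q)$; $G\cong\mathrm{PGL}(2,q)$. *)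

theory Defs
  imports Main
begin

(* Vectors of F^4 are lists of length 4 (coordinates Y0,Y1,Y2,Y3).
   A point of PG(3,q) is the set of all nonzero scalar multiples of a nonzero vector. *)
definition pt :: "'a::field list \<Rightarrow> 'a list set" where
  "pt v = {map (\<lambda>y. c * y) v | c. c \<noteq> 0}"

definition PG3 :: "'a::field list set set" where
  "PG3 = {pt v | v. length v = 4 \<and> v \<noteq> replicate 4 0}"

definition vecmat :: "'a::field list \<Rightarrow> 'a list list \<Rightarrow> 'a list" where
  "vecmat v M = map (\<lambda>j. \<Sum>i<4. v ! i * (M ! i ! j)) [0..<4]"

definition proj :: "'a::field list list \<Rightarrow> 'a list set \<Rightarrow> 'a list set" where
  "proj M = (\<lambda>P. if P \<in> PG3 then (\<lambda>v. vecmat v M) ` P else undefined)"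

definition nu :: "'a::field \<Rightarrow> 'a \<Rightarrow> 'a \<Rightarrow> 'a \<Rightarrow> 'a list list" where
  "nu a b c d =
    [[a^3, a^2*b, a*b^2, b^3],
     [3*a^2*c, a^2*d + 2*a*b*c, b^2*c + 2*a*b*d, 3*b^2*d],
     [3*a*c^2, b*c^2 + 2*a*c*d, a*d^2 + 2*b*c*d, 3*b*d^2],
     [c^3, c^2*d, c*d^2, d^3]]"

(* the group G: image of PGL(2,q), as a set of permutations of the points of PG(3,q) *)
definition G :: "('a::field list set \<Rightarrow> 'a list set) set" where
  "G = {proj (nu a b c d) | a b c d. a * d - b * c \<noteq> 0}"

definition ell :: "'a::field \<Rightarrow> 'a list set set" where
  "ell u = {P \<in> PG3. \<forall>Y\<in>P. Y!3 - 3*u*Y!2 + 3*u^2*Y!1 - u^3*Y!0 = 0 \<and> Y!1 - Y!2 = 0}"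

definition stabiliser :: "('a::field list set \<Rightarrow> 'a list set) set \<Rightarrow> 'a list set set
    \<Rightarrow> ('a list set \<Rightarrow> 'a list set) set" where
  "stabiliser H S = {g \<in> H. g ` S = S}"

end

theory Submission
  imports Defs
begin

text \<open>A projectivity of \<open>G\<close> fixing \<open>\<ell>\<^sub>u\<close> maps the two points \<open>(1,0,0,u\<^sup>3)\<close> and
\<open>(0,1,1,3u-3u\<^sup>2)\<close> of \<open>\<ell>\<^sub>u\<close> back into \<open>\<ell>\<^sub>u\<close>. These four polynomial conditions force the
matrix \<open>(a b; c d)\<close> to be a scalar multiple either of the identity or of the trace-zero matrix
\<open>(-(u\<^sup>2+u), 2u\<^sup>3-4u\<^sup>2; 4u-2, u\<^sup>2+u)\<close>. Conversely the latter preserves \<open>\<ell>\<^sub>u\<close>, and since its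
square is scalar it induces an involution.\<close>

lemma vecmat_4: "vecmat [y0,y1,y2,y3] M =
  [y0*M!0!0 + y1*M!1!0 + y2*M!2!0 + y3*M!3!0,
   y0*M!0!1 + y1*M!1!1 + y2*M!2!1 + y3*M!3!1,
   y0*M!0!2 + y1*M!1!2 + y2*M!2!2 + y3*M!3!2,
   y0*M!0!3 + y1*M!1!3 + y2*M!2!3 + y3*M!3!3]"
  by (simp add: vecmat_def eval_nat_numeral upt_rec lessThan_Suc add.commute add.left_commute)

lemma vecmat_nu: "vecmat [y0,y1,y2,y3] (nu a b c d) =
  [y0*a^3 + y1*(3*a^2*c) + y2*(3*a*c^2) + y3*c^3,
   y0*(a^2*b) + y1*(a^2*d + 2*a*b*c) + y2*(b*c^2 + 2*a*c*d) + y3*(c^2*d),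
   y0*(a*b^2) + y1*(b^2*c + 2*a*b*d) + y2*(a*d^2 + 2*b*c*d) + y3*(c*d^2),
   y0*b^3 + y1*(3*b^2*d) + y2*(3*b*d^2) + y3*d^3]"
  by (simp add: vecmat_4 nu_def)

lemma length_4_cases:
  assumes "length v = 4"
  obtains y0 y1 y2 y3 where "v = [y0,y1,y2,y3]"
  using assms by (cases v rule: rev_cases; simp; metis length_Suc_conv numeral_3_eq_3 length_0_conv)

lemma length_vecmat [simp]: "length (vecmat v M) = 4"
  by (simp add: vecmat_def)

lemma vecmat_smult:
  assumes "length v = 4"
  shows "vecmat (map (\<lambda>y. k*y) v) M = map (\<lambda>y. k*y) (vecmat v M)"
  using assms by (simp add: vecmat_def sum_distrib_left mult.assoc)

lemma vecmat_nu_mult: "length v = 4 \<Longrightarrow> vecmat (vecmat v (nu a b c d)) (nu a' b' c' d') =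
   vecmat v (nu (a*a'+b*c') (a*b'+b*d') (c*a'+d*c') (c*b'+d*d'))"
  by (elim length_4_cases, hypsubst_thin) (simp only: vecmat_nu; simp; algebra)

lemma vecmat_nu_scalar: "length v = 4 \<Longrightarrow> vecmat v (nu k 0 0 k) = map (\<lambda>y. k^3*y) v"
  by (elim length_4_cases) (simp add: vecmat_nu power3_eq_cube power2_eq_square)

lemma vecmat_nu_smult: "length v = 4 \<Longrightarrow>
    vecmat v (nu (l*a) (l*b) (l*c) (l*d)) = map (\<lambda>y. l^3*y) (vecmat v (nu a b c d))"
  by (elim length_4_cases, hypsubst_thin) (simp only: vecmat_nu; simp; algebra)

lemma vecmat_nu_nonzero:
  fixes a b c d :: "'a::field"
  assumes "length v = 4" "v \<noteq> replicate 4 0" "a*d - b*c \<noteq> 0"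
  shows "vecmat v (nu a b c d) \<noteq> replicate 4 0"
proof
  assume "vecmat v (nu a b c d) = replicate 4 0"
  then have "vecmat (vecmat v (nu a b c d)) (nu d (-b) (-c) a) = replicate 4 0"
    by (simp add: numeral_eq_Suc vecmat_4)
  moreover have "vecmat (vecmat v (nu a b c d)) (nu d (-b) (-c) a) = map (\<lambda>y. (a*d-b*c)^3*y) v"
    using assms(1) by (simp add: vecmat_nu_mult vecmat_nu_scalar mult.commute)
  ultimately show False
    using assms by (elim length_4_cases) (simp add: numeral_eq_Suc)
qed

lemma mem_pt_iff: "w \<in> pt v \<longleftrightarrow> (\<exists>c. c \<noteq> 0 \<and> w = map (\<lambda>y. c*y) v)"
  unfolding pt_def by auto

lemma mem_pt_self: "v \<in> pt v"
  unfolding mem_pt_iff by (intro exI[of _ 1]) (simp add: map_idI)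

lemma pt_eq_image: "pt v = (\<lambda>c. map (\<lambda>y. c*y) v) ` {c. c \<noteq> 0}"
  unfolding pt_def by auto

lemma pt_smult:
  assumes "(k::'a::field) \<noteq> 0"
  shows "pt (map (\<lambda>y. k*y) v) = pt v"
proof (intro set_eqI iffI)
  fix w
  assume "w \<in> pt (map (\<lambda>y. k*y) v)"
  then obtain c where "c \<noteq> 0" "w = map (\<lambda>y. (c*k)*y) v"
    by (auto simp: mem_pt_iff mult.assoc)
  with assms show "w \<in> pt v"
    unfolding mem_pt_iff by (intro exI[of _ "c*k"]) simp
next
  fix w
  assume "w \<in> pt v"
  then obtain c where "c \<noteq> 0" "w = map (\<lambda>y. (c/k)*(k*y)) v"
    using assms by (auto simp: mem_pt_iff)
  with assms show "w \<in> pt (map (\<lambda>y. k*y) v)"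
    unfolding mem_pt_iff by (intro exI[of _ "c/k"]) simp
qed

lemma pt_in_PG3: "length v = 4 \<Longrightarrow> v \<noteq> replicate 4 0 \<Longrightarrow> pt v \<in> PG3"
  unfolding PG3_def by blast

lemma vecmat_image_pt:
  assumes "length v = 4"
  shows "(\<lambda>w. vecmat w M) ` pt v = pt (vecmat v M)"
  unfolding pt_eq_image image_image vecmat_smult[OF assms] ..

lemma proj_pt: "length v = 4 \<Longrightarrow> v \<noteq> replicate 4 0 \<Longrightarrow> proj M (pt v) = pt (vecmat v M)"
  by (simp add: proj_def pt_in_PG3 vecmat_image_pt)

lemma proj_nu_comp:
  assumes "a*d - b*c \<noteq> 0" "P \<in> PG3"
  shows "proj (nu a' b' c' d') (proj (nu a b c d) P) =
    proj (nu (a*a'+b*c') (a*b'+b*d') (c*a'+d*c') (c*b'+d*d')) P"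
proof -
  obtain v where v: "P = pt v" "length v = 4" "v \<noteq> replicate 4 0"
    using assms(2) unfolding PG3_def by blast
  then show ?thesis
    using assms(1) by (simp add: proj_pt vecmat_nu_nonzero vecmat_nu_mult)
qed

lemma proj_nu_scalar:
  assumes "(k::'a::field) \<noteq> 0" "P \<in> PG3"
  shows "proj (nu k 0 0 k) P = P"
  using assms unfolding PG3_def by (auto simp: proj_pt vecmat_nu_scalar pt_smult)

lemma proj_nu_involutive:
  assumes "a*(-a) - b*c \<noteq> 0" "P \<in> PG3"
  shows "proj (nu a b c (-a)) (proj (nu a b c (-a)) P) = P"
proof -
  have "a*a + b*c \<noteq> 0"
    using assms(1) by (simp add: neg_eq_iff_add_eq_0)
  then show ?thesis
    using assms by (simp add: proj_nu_comp proj_nu_scalar mult.commute[of c b] add.commute[of "b*c"])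
qed

lemma proj_nu_smult:
  assumes "(l::'a::field) \<noteq> 0"
  shows "proj (nu (l*a) (l*b) (l*c) (l*d)) = proj (nu a b c d)"
proof
  fix P :: "'a list set"
  show "proj (nu (l*a) (l*b) (l*c) (l*d)) P = proj (nu a b c d) P"
  proof (cases "P \<in> PG3")
    case True
    then show ?thesis
      using assms unfolding PG3_def by (auto simp: proj_pt vecmat_nu_smult pt_smult)
  qed (simp add: proj_def)
qed

lemma offdiag_zero_if_proj_nu_eq_identity:
  fixes a b c d :: "'a::field"
  assumes "proj (nu a b c d) = proj (nu 1 0 0 1)"
  shows "b = 0 \<and> c = 0"
proof -
  have image_of_base_point: "vecmat v (nu a b c d) \<in> pt v"
    if "v \<noteq> replicate 4 0" "length v = 4" for v :: "'a list"
  proof -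
    have "pt v = proj (nu 1 0 0 1) (pt v)"
      using that by (simp add: proj_nu_scalar pt_in_PG3)
    also have "\<dots> = pt (vecmat v (nu a b c d))"
      using that by (simp add: assms[symmetric] proj_pt)
    finally show ?thesis
      using mem_pt_self by metis
  qed
  have "b^3 = 0"
    using image_of_base_point[of "[1,0,0,0]"] by (auto simp: vecmat_nu mem_pt_iff numeral_eq_Suc)
  moreover have "c^3 = 0"
    using image_of_base_point[of "[0,0,0,1]"] by (auto simp: vecmat_nu mem_pt_iff numeral_eq_Suc)
  ultimately show ?thesis
    by simp
qed

definition ell_eqs :: "'a::field \<Rightarrow> 'a list \<Rightarrow> bool" where
  "ell_eqs u Y \<longleftrightarrow> Y!3 - 3*u*Y!2 + 3*u^2*Y!1 - u^3*Y!0 = 0 \<and> Y!1 - Y!2 = 0"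

lemma ell_eqs_4:
  "ell_eqs u [y0,y1,y2,y3] \<longleftrightarrow> y3 - 3*u*y2 + 3*u^2*y1 - u^3*y0 = 0 \<and> y1 - y2 = 0"
  by (simp add: ell_eqs_def)

lemma ell_eq_Collect: "ell u = {P \<in> PG3. \<forall>Y\<in>P. ell_eqs u Y}"
  unfolding ell_def ell_eqs_def ..

lemma ell_subset_PG3: "ell u \<subseteq> PG3"
  unfolding ell_eq_Collect by blast

lemma ell_eqs_smult:
  assumes "length Y = 4" "ell_eqs u Y"
  shows "ell_eqs u (map (\<lambda>y. k*y) Y)"
proof -
  have "Y!3 - 3*u*Y!2 + 3*u^2*Y!1 - u^3*Y!0 = 0" "Y!1 - Y!2 = 0"
    using assms(2) unfolding ell_eqs_def by auto
  then have "k*(Y!3 - 3*u*Y!2 + 3*u^2*Y!1 - u^3*Y!0) = 0" "k*(Y!1 - Y!2) = 0"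
    by simp_all
  then show ?thesis
    using assms(1) unfolding ell_eqs_def by (simp add: algebra_simps)
qed

lemma ell_eqs_if_pt_in_ell: "pt v \<in> ell u \<Longrightarrow> ell_eqs u v"
  using mem_pt_self unfolding ell_eq_Collect by blast

lemma pt_in_ell_iff:
  assumes "length v = 4" "v \<noteq> replicate 4 0"
  shows "pt v \<in> ell u \<longleftrightarrow> ell_eqs u v"
proof
  show "pt v \<in> ell u \<Longrightarrow> ell_eqs u v"
    by (rule ell_eqs_if_pt_in_ell)
  show "ell_eqs u v \<Longrightarrow> pt v \<in> ell u"
    using assms ell_eqs_smult by (auto simp: ell_eq_Collect pt_in_PG3 mem_pt_iff)
qed

definition ell_involution :: "'a::field \<Rightarrow> 'a list list" where
  "ell_involution u = nu (-(u^2+u)) (2*u^3-4*u^2) (4*u-2) (u^2+u)"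

lemma ell_eqs_vecmat_involution:
  assumes "length v = 4" "ell_eqs u v"
  shows "ell_eqs u (vecmat v (ell_involution u))"
proof -
  obtain y0 y1 y2 y3 where v: "v = [y0,y1,y2,y3]"
    using assms(1) by (rule length_4_cases)
  have "y3 - 3*u*y2 + 3*u^2*y1 - u^3*y0 = 0" "y1 - y2 = 0"
    using assms(2) unfolding v ell_eqs_4 by auto
  then show ?thesis
    unfolding v ell_eqs_4 ell_involution_def vecmat_nu by (intro conjI; algebra)
qed

lemma ell_involution_det:
  fixes u :: "'a::field"
  assumes "(3::'a) \<noteq> 0" "u \<noteq> 0" "u \<noteq> 1"
  shows "(-(u^2+u))*(u^2+u) - (2*u^3-4*u^2)*(4*u-2) \<noteq> 0"
proof -
  have "(-(u^2+u))*(u^2+u) - (2*u^3-4*u^2)*(4*u-2) = -((3*u*(u-1))^2)"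
    by algebra
  moreover have "3*u*(u-1) \<noteq> 0"
    using assms by simp
  ultimately show ?thesis
    by simp
qed

lemma proj_ell_involution_image:
  fixes u :: "'a::field"
  assumes "(3::'a) \<noteq> 0" "u \<noteq> 0" "u \<noteq> 1"
  shows "proj (ell_involution u) ` ell u = ell u"
proof -
  let ?g = "proj (ell_involution u)"
  note det = ell_involution_det[OF assms]
  have maps_into: "?g P \<in> ell u" if "P \<in> ell u" for P
  proof -
    obtain v where v: "P = pt v" "length v = 4" "v \<noteq> replicate 4 0"
      using \<open>P \<in> ell u\<close> ell_subset_PG3 unfolding PG3_def by blast
    then have "ell_eqs u (vecmat v (ell_involution u))"
      using \<open>P \<in> ell u\<close> by (simp add: pt_in_ell_iff ell_eqs_vecmat_involution)
    then show ?thesis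
      using v det by (simp add: proj_pt pt_in_ell_iff ell_involution_def vecmat_nu_nonzero)
  qed
  have involutive: "?g (?g P) = P" if "P \<in> ell u" for P
    using proj_nu_involutive[of "-(u^2+u)" "2*u^3-4*u^2" "4*u-2" P] det that ell_subset_PG3
    unfolding ell_involution_def minus_minus by blast
  show ?thesis
    using maps_into involutive by (auto intro: rev_image_eqI[of "?g _"])
qed

lemma ell_eqs_image_e:
  "ell_eqs u (vecmat [1,0,0,u^3] (nu a b c d)) \<longleftrightarrow>
     (b-u*a)^3 + u^3*(d-u*c)^3 = 0 \<and> a*b*(a-b) + u^3*(c*d*(c-d)) = 0"
  unfolding vecmat_nu ell_eqs_4
  by (rule arg_cong2[where f = "\<lambda>x y. x = 0 \<and> y = 0"]; algebra)

lemma ell_eqs_image_f: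
  "ell_eqs u (vecmat [0,1,1,3*u-3*u^2] (nu a b c d)) \<longleftrightarrow>
     3*(b-u*a)^2*(d-u*c) + 3*(b-u*a)*(d-u*c)^2 + (3*u-3*u^2)*(d-u*c)^3 = 0 \<and>
     (a+c)*(b+d)*((a-b)+(c-d)) - a*b*(a-b) - c*d*(c-d) + (3*u-3*u^2)*(c*d*(c-d)) = 0"
  unfolding vecmat_nu ell_eqs_4
  by (rule arg_cong2[where f = "\<lambda>x y. x = 0 \<and> y = 0"]; algebra)

lemma ell_stabiliser_b_eq:
  fixes a b c d u :: "'a::field"
  assumes "(3::'a) \<noteq> 0" "u^2 - u + 1 \<noteq> 0" "a*d - b*c \<noteq> 0"
    and "(b-u*a)^3 + u^3*(d-u*c)^3 = 0"
    and "3*(b-u*a)^2*(d-u*c) + 3*(b-u*a)*(d-u*c)^2 + (3*u-3*u^2)*(d-u*c)^3 = 0"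
  shows "b = u*a - u*d + u^2*c"
proof -
  define \<alpha> where "\<alpha> = b - u*a"
  define \<beta> where "\<beta> = d - u*c"
  have cubic: "\<alpha>^3 + u^3*\<beta>^3 = 0"
    using assms(4) unfolding \<alpha>_def \<beta>_def .
  have \<beta>_nonzero: "\<beta> \<noteq> 0"
  proof
    assume "\<beta> = 0"
    with cubic have "\<alpha> = 0"
      by simp
    have "a*d - b*c = a*\<beta> - \<alpha>*c"
      unfolding \<alpha>_def \<beta>_def by algebra
    with \<open>\<beta> = 0\<close> \<open>\<alpha> = 0\<close> assms(3) show False
      by simp
  qed
  have "3*\<beta>*((\<alpha> + u*\<beta>)*(\<alpha> + (1-u)*\<beta>)) = 0"
    using assms(5) unfolding \<alpha>_def \<beta>_def by algebra
  with assms(1) \<beta>_nonzero have factors: "(\<alpha> + u*\<beta>)*(\<alpha> + (1-u)*\<beta>) = 0"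
    by simp
  have "\<alpha> = -u*\<beta>"
  proof (cases "\<alpha> + (1-u)*\<beta> = 0")
    case True
    then have "\<alpha> = (u-1)*\<beta>"
      by algebra
    with cubic have "\<beta>^3*((2*u-1)*(u^2-u+1)) = 0"
      by algebra
    with \<beta>_nonzero assms(2) have "2*u - 1 = 0"
      by simp
    then have "u-1 = -u"
      by algebra
    with \<open>\<alpha> = (u-1)*\<beta>\<close> show ?thesis
      by simp
  next
    case False
    with factors show ?thesis
      by (simp add: eq_neg_iff_add_eq_0)
  qed
  then show ?thesis
    unfolding \<alpha>_def \<beta>_def by algebra
qed

lemma ell_stabiliser_linear_relations:
  fixes a b c d u :: "'a::field"
  assumes "u \<noteq> 0" "u \<noteq> 1" "u^2 - u + 1 \<noteq> 0" "a*d - b*c \<noteq> 0"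
    and b_eq: "b = u*a - u*d + u^2*c"
    and "a*b*(a-b) + u^3*(c*d*(c-d)) = 0"
    and "(a+c)*(b+d)*((a-b)+(c-d)) - a*b*(a-b) - c*d*(c-d) + (3*u-3*u^2)*(c*d*(c-d)) = 0"
  shows "d - u*c \<noteq> 0"
    and "(2*u-1)*(d-u*c) + 3*u*(u-1)*c = (2*u-1)*(a+u*c)"
    and "a + u*c = d - u*c \<or> a + u*c = -(d - u*c)"
proof -
  define A where "A = a + u*c"
  define K where "K = d - u*c"
  define R where "R = K^2 + (4*u-2)*K*c + 3*u*(u-1)*c^2"
  define S where "S = (2*u-1)*K + 3*u*(u-1)*c"
  have "a*d - b*c = A*K"
    using b_eq unfolding A_def K_def by algebra
  with assms(4) have "A \<noteq> 0" "K \<noteq> 0"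
    by auto
  from \<open>K \<noteq> 0\<close> show "d - u*c \<noteq> 0"
    unfolding K_def .
  have "u*A*((1-u)*A^2 + A*S - u*R) = 0"
    using assms(6) b_eq unfolding A_def K_def R_def S_def by algebra
  with assms(1) \<open>A \<noteq> 0\<close> have eq1: "(1-u)*A^2 + A*S - u*R = 0"
    by simp
  have "A*((2*u-1)*R - A*S) = 0"
    using assms(7) b_eq unfolding A_def K_def R_def S_def by algebra
  with \<open>A \<noteq> 0\<close> have eq2: "(2*u-1)*R - A*S = 0"
    by simp
  have "(1-u)*(A^2 - R) = 0"
    using eq1 eq2 by algebra
  with assms(2) have "A^2 = R"
    by simp
  with eq2 have "A*(S - (2*u-1)*A) = 0"
    by algebra
  with \<open>A \<noteq> 0\<close> have "S = (2*u-1)*A"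
    by simp
  then show "(2*u-1)*(d-u*c) + 3*u*(u-1)*c = (2*u-1)*(a+u*c)"
    unfolding S_def A_def K_def .
  have "(u^2-u+1)*((A-K)*(A+K)) = 0"
    using \<open>S = (2*u-1)*A\<close> \<open>A^2 = R\<close> unfolding R_def S_def by algebra
  with assms(3) have "A = K \<or> A = -K"
    by (simp add: eq_neg_iff_add_eq_0)
  then show "a + u*c = d - u*c \<or> a + u*c = -(d - u*c)"
    unfolding A_def K_def .
qed

lemma ell_stabiliser_coeffs:
  fixes a b c d u :: "'a::field"
  assumes "(3::'a) \<noteq> 0" "u \<noteq> 0" "u \<noteq> 1" "d - u*c \<noteq> 0"
    and b_eq: "b = u*a - u*d + u^2*c"
    and S_eq: "(2*u-1)*(d-u*c) + 3*u*(u-1)*c = (2*u-1)*(a+u*c)"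
    and "a + u*c = d - u*c \<or> a + u*c = -(d - u*c)"
  shows "\<exists>l. l \<noteq> 0 \<and> ((a,b,c,d) = (l,0,0,l) \<or>
           (a,b,c,d) = (l*(-(u^2+u)), l*(2*u^3-4*u^2), l*(4*u-2), l*(u^2+u)))"
proof -
  have "3*u*(u-1) \<noteq> 0"
    using assms(1-3) by simp
  from assms(7) show ?thesis
  proof (elim disjE)
    assume "a + u*c = d - u*c"
    with S_eq \<open>3*u*(u-1) \<noteq> 0\<close> have "c = 0"
      by simp
    with \<open>a + u*c = d - u*c\<close> assms(4) b_eq show ?thesis
      by auto
  next
    assume "a + u*c = -(d - u*c)"
    define l where "l = -(d - u*c)/(3*u*(u-1))"
    have "l \<noteq> 0"
      using assms(4) \<open>3*u*(u-1) \<noteq> 0\<close> unfolding l_def by simp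
    moreover have K_eq: "d - u*c = -3*u*(u-1)*l"
      using \<open>3*u*(u-1) \<noteq> 0\<close> unfolding l_def by simp
    with S_eq \<open>a + u*c = -(d - u*c)\<close> have "3*u*(u-1)*c = 3*u*(u-1)*(l*(4*u-2))"
      by algebra
    with \<open>3*u*(u-1) \<noteq> 0\<close> have "c = l*(4*u-2)"
      by simp
    moreover have "d = l*(u^2+u)"
      using \<open>c = l*(4*u-2)\<close> K_eq by algebra
    moreover have "a = l*(-(u^2+u))"
      using \<open>c = l*(4*u-2)\<close> K_eq \<open>a + u*c = -(d - u*c)\<close> by algebra
    moreover have "b = l*(2*u^3-4*u^2)"
      using \<open>c = l*(4*u-2)\<close> \<open>d = l*(u^2+u)\<close> \<open>a = l*(-(u^2+u))\<close> b_eq by algebra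
    ultimately show ?thesis
      by blast
  qed
qed

lemma proj_nu_stabilising_ell:
  fixes a b c d u :: "'a::field"
  assumes "(3::'a) \<noteq> 0" "u \<noteq> 0" "u \<noteq> 1" "u^2 - u + 1 \<noteq> 0" "a*d - b*c \<noteq> 0"
    and stab: "proj (nu a b c d) ` ell u = ell u"
  shows "proj (nu a b c d) = proj (nu 1 0 0 1) \<or> proj (nu a b c d) = proj (ell_involution u)"
proof -
  have image_eqs: "ell_eqs u (vecmat v (nu a b c d))"
    if "length v = 4" "v \<noteq> replicate 4 0" "ell_eqs u v" for v
  proof -
    have "proj (nu a b c d) (pt v) \<in> ell u"
      using that stab by (auto simp: pt_in_ell_iff)
    then show ?thesis
      using that by (simp add: proj_pt ell_eqs_if_pt_in_ell)
  qed
  have "ell_eqs u (vecmat [1,0,0,u^3] (nu a b c d))"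
    by (rule image_eqs) (simp_all add: numeral_eq_Suc ell_eqs_4)
  then have e: "(b-u*a)^3 + u^3*(d-u*c)^3 = 0" "a*b*(a-b) + u^3*(c*d*(c-d)) = 0"
    unfolding ell_eqs_image_e by auto
  have "ell_eqs u (vecmat [0,1,1,3*u-3*u^2] (nu a b c d))"
    by (rule image_eqs) (simp_all add: numeral_eq_Suc ell_eqs_4 algebra_simps)
  then have f:
    "3*(b-u*a)^2*(d-u*c) + 3*(b-u*a)*(d-u*c)^2 + (3*u-3*u^2)*(d-u*c)^3 = 0"
    "(a+c)*(b+d)*((a-b)+(c-d)) - a*b*(a-b) - c*d*(c-d) + (3*u-3*u^2)*(c*d*(c-d)) = 0"
    unfolding ell_eqs_image_f by auto
  have b_eq: "b = u*a - u*d + u^2*c"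
    using ell_stabiliser_b_eq[OF assms(1,4,5) e(1) f(1)] .
  note relations = ell_stabiliser_linear_relations[OF assms(2-5) b_eq e(2) f(2)]
  obtain l where "l \<noteq> 0" and
    "(a,b,c,d) = (l,0,0,l) \<or>
     (a,b,c,d) = (l*(-(u^2+u)), l*(2*u^3-4*u^2), l*(4*u-2), l*(u^2+u))"
    using ell_stabiliser_coeffs[OF assms(1-3) relations(1) b_eq relations(2,3)] by blast
  then show ?thesis
    using proj_nu_smult[OF \<open>l \<noteq> 0\<close>, of 1 0 0 1]
      proj_nu_smult[OF \<open>l \<noteq> 0\<close>, of "-(u^2+u)" "2*u^3-4*u^2" "4*u-2" "u^2+u"]
    unfolding ell_involution_def by auto
qed

lemma stabiliser_G_ell:
  fixes u :: "'a::field"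
  assumes "(3::'a) \<noteq> 0" "u \<noteq> 0" "u \<noteq> 1" "u^2 - u + 1 \<noteq> 0"
  shows "stabiliser G (ell u) = {proj (nu 1 0 0 1), proj (ell_involution u)}"
proof (intro equalityI subsetI)
  fix g
  assume "g \<in> stabiliser G (ell u)"
  then show "g \<in> {proj (nu 1 0 0 1), proj (ell_involution u)}"
    using proj_nu_stabilising_ell[OF assms] unfolding stabiliser_def G_def by blast
next
  have "proj (nu 1 0 0 1) \<in> G"
    unfolding G_def by (intro CollectI exI[of _ 1] exI[of _ 0]) simp
  moreover have "proj (nu 1 0 0 1) ` ell u = ell u"
  proof -
    have "proj (nu 1 0 0 1) P = P" if "P \<in> ell u" for P
      using that by (simp add: proj_nu_scalar subsetD[OF ell_subset_PG3])
    then show ?thesis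
      by simp
  qed
  moreover have "proj (ell_involution u) \<in> G"
    using ell_involution_det[OF assms(1-3)] unfolding G_def ell_involution_def by blast
  ultimately show "g \<in> stabiliser G (ell u)"
    if "g \<in> {proj (nu 1 0 0 1), proj (ell_involution u)}" for g
    using that proj_ell_involution_image[OF assms(1-3)] unfolding stabiliser_def by auto
qed

lemma proj_ell_involution_ne_identity:
  fixes u :: "'a::field"
  assumes "(2::'a) \<noteq> 0" "(3::'a) \<noteq> 0"
  shows "proj (ell_involution u) \<noteq> proj (nu 1 0 0 1)"
proof
  assume "proj (ell_involution u) = proj (nu 1 0 0 1)"
  then have "2*u^3 - 4*u^2 = 0" "4*u - 2 = 0"
    unfolding ell_involution_def by (auto dest: offdiag_zero_if_proj_nu_eq_identity)
  then have "2*(2*u - 1) = 0" "2*(u^2*(u-2)) = 0"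
    by algebra+
  with assms(1) have "2*u - 1 = 0" "u = 0 \<or> u - 2 = 0"
    by (simp_all only: mult_eq_0_iff power_eq_0_iff zero_less_numeral simp_thms)
  then have "u - 2 = 0"
    by auto
  then have "(3::'a) = 2*u - 1"
    by algebra
  with \<open>2*u - 1 = 0\<close> assms(2) show False
    by simp
qed

lemma nonsquare_discriminant_facts:
  fixes u :: "'a::field"
  assumes "\<not> (\<exists>x. x^2 = u^2 - u + 1)"
  shows "u \<noteq> 0" "u \<noteq> 1" "u^2 - u + 1 \<noteq> 0"
proof -
  have "1^2 \<noteq> u^2 - u + 1" "0^2 \<noteq> u^2 - u + 1"
    using assms by blast+
  then show "u \<noteq> 0" "u \<noteq> 1" "u^2 - u + 1 \<noteq> 0"
    by auto
qed

theorem mainTheorem7: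
  fixes u :: "'a::{field, finite}"
  assumes "(2::'a) \<noteq> 0" and "(3::'a) \<noteq> 0"
    and "\<not> (\<exists>x::'a. x^2 = u^2 - u + 1)"
  shows "card (stabiliser (G :: ('a list set \<Rightarrow> 'a list set) set) (ell u)) = 2"
proof -
  have "stabiliser G (ell u) = {proj (nu 1 0 0 1), proj (ell_involution u)}"
    using stabiliser_G_ell assms(2) nonsquare_discriminant_facts[OF assms(3)] by blast
  moreover have "proj (ell_involution u) \<noteq> proj (nu 1 0 0 1)"
    using proj_ell_involution_ne_identity assms(1,2) by blast
  ultimately show ?thesis
    by simp
qed

end
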